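(* Let $R$ be a pre-Schreier domain and let $a,b,c,d\in R$. If $ab=cd$, $a$ and $c$ are relatively prime, and $b$ and $d$ are relatively prime, then $a\sim d$ and $b\sim c$.
   Context: A domain is a commutative ring with identity without zero divisors. A domain $R$ is pre-Schreier if every non-zero $a\in R$ is primal: whenever $a\mid bc$ with $b,c\in R$, there exist $a_1,a_2\in R$ with $a=a_1a_2$, $a_1\mid b$ and $a_2\mid c$. Elements $a,b$ are relatively prime if they have no common non-invertible divisor. $a\sim b$ means $a$ and $b$ are associated. *)

theory Defs
  imports Main
begin

definition primal :: "'a::idom \<Rightarrow> bool" where
  "primal a \<longleftrightarrow> (\<forall>b c. a dvd b * c \<longrightarrow>
     (\<exists>a1 a2. a = a1 * a2 \<and> a1 dvd b \<and> a2 dvd c))"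

definition pre_schreier :: "'a::idom itself \<Rightarrow> bool" where
  "pre_schreier _ \<longleftrightarrow> (\<forall>a::'a. a \<noteq> 0 \<longrightarrow> primal a)"

definition rel_prime :: "'a::idom \<Rightarrow> 'a \<Rightarrow> bool" where
  "rel_prime a b \<longleftrightarrow> (\<forall>x. x dvd a \<and> x dvd b \<longrightarrow> x dvd 1)"

definition associated :: "'a::idom \<Rightarrow> 'a \<Rightarrow> bool" where
  "associated a b \<longleftrightarrow> a dvd b \<and> b dvd a"

end

theory Submission
  imports Defs
begin

text \<open>If \<open>x\<close> divides \<open>c d\<close> and is prime to \<open>c\<close>, primality of \<open>x\<close> splits it as
  \<open>x = x\<^sub>1 x\<^sub>2\<close> with \<open>x\<^sub>1\<close> a common divisor of \<open>x\<close> and \<open>c\<close>, hence a unit, and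
  \<open>x\<^sub>2\<close> dividing \<open>d\<close>; so \<open>x\<close> divides \<open>d\<close>. Applied to each of \<open>a, b, c, d\<close> this
  gives \<open>a | d\<close>, \<open>d | a\<close>, \<open>b | c\<close>, \<open>c | b\<close>. Zero needs no separate treatment:
  in a domain \<open>0\<close> is primal, so every element of a pre-Schreier domain is.\<close>

lemma primal_0: "primal (0::'a::idom)"
  unfolding primal_def
proof (intro allI impI)
  fix b c :: 'a
  assume "0 dvd b * c"
  then have "b = 0 \<or> c = 0" by simp
  then show "\<exists>a1 a2. 0 = a1 * a2 \<and> a1 dvd b \<and> a2 dvd c"
    by (metis dvd_0_right mult_zero_left mult_zero_right one_dvd)
qed

lemma pre_schreier_primal:
  assumes "pre_schreier TYPE('a::idom)"
  shows "primal (x::'a)"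
  using assms primal_0 unfolding pre_schreier_def by (cases "x = 0") auto

lemma rel_prime_commute: "rel_prime a b \<longleftrightarrow> rel_prime b a"
  unfolding rel_prime_def by blast

lemma primal_dvd_mult_rel_prime:
  fixes x y z :: "'a::idom"
  assumes "primal x" and "rel_prime x y" and "x dvd y * z"
  shows "x dvd z"
proof -
  obtain x1 x2 where x: "x = x1 * x2" and "x1 dvd y" and "x2 dvd z"
    using assms(1,3) unfolding primal_def by blast
  have "x1 dvd x" using x by simp
  with \<open>x1 dvd y\<close> have "x1 dvd 1"
    using assms(2) unfolding rel_prime_def by blast
  then obtain k where "1 = x1 * k" by (rule dvdE)
  then have "x2 = x * k" using x by (simp add: ac_simps)
  then show ?thesis using \<open>x2 dvd z\<close> by (metis dvd_mult_left)
qed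

theorem lemma2:
  fixes a b c d :: "'a::idom"
  assumes "pre_schreier TYPE('a)"
    and "a * b = c * d"
    and "rel_prime a c"
    and "rel_prime b d"
  shows "associated a d \<and> associated b c"
proof -
  have primal: "primal x" for x :: 'a
    using assms(1) by (rule pre_schreier_primal)
  have "a dvd c * d" "d dvd b * a" "b dvd d * c" "c dvd a * b"
    using assms(2) by (metis dvd_triv_left dvd_triv_right mult.commute)+
  then have "a dvd d" "d dvd a" "b dvd c" "c dvd b"
    using assms(3,4) rel_prime_commute
    by (metis primal primal_dvd_mult_rel_prime)+
  then show ?thesis unfolding associated_def by blast
qed

end
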